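(* Let $G$ be a left (resp. right) topological group and let $H$ be a closed subgroup of $G$. Then $\mathrm{r}_{\mathcal C_1}H=\mathrm{r}_{(G,\mathcal C_1)}(H)$; that is, the map $\mathrm{r}_{\mathcal C_1}H\to\mathrm{r}_{\mathcal C_1}G$ induced by the inclusion $H\hookrightarrow G$ is a homeomorphism of $\mathrm{r}_{\mathcal C_1}H$ onto the subspace $\mathrm{r}_{(G,\mathcal C_1)}(H)$ of $\mathrm{r}_{\mathcal C_1}G$.
   Context: A left (resp. right) topological group is a group with a topology in which all left translations $x\mapsto ax$ (resp. right translations $x\mapsto xa$) are continuous. $\mathcal C_1$ is the epireflective subcategory of $\mathbf{Top}$ of $T_1$ spaces; $\mathrm{r}_{\mathcal C_1}X$ is the $T_1$-reflection of a space $X$, with universal continuous surjection $\mathrm{r}_{(X,\mathcal C_1)}\colon X\to\mathrm{r}_{\mathcal C_1}X$ through which every continuous map from $X$ into a $T_1$ space factors uniquely. *)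

theory Defs
  imports "HOL-Analysis.Analysis" "HOL-Algebra.Group"
begin

definition left_topological_group :: "('a, 'm) monoid_scheme \<Rightarrow> 'a topology \<Rightarrow> bool" where
  "left_topological_group G T \<longleftrightarrow> group G \<and> topspace T = carrier G \<and>
     (\<forall>a \<in> carrier G. continuous_map T T (\<lambda>x. a \<otimes>\<^bsub>G\<^esub> x))"

definition right_topological_group :: "('a, 'm) monoid_scheme \<Rightarrow> 'a topology \<Rightarrow> bool" where
  "right_topological_group G T \<longleftrightarrow> group G \<and> topspace T = carrier G \<and>
     (\<forall>a \<in> carrier G. continuous_map T T (\<lambda>x. x \<otimes>\<^bsub>G\<^esub> a))"

text \<open>The test spaces Z range over topologies on the type of points of X; since the image of X
under a map has cardinality at most that of X, this is equivalent to quantifying over all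
T1 spaces.\<close>

definition T1_reflection :: "'a topology \<Rightarrow> 'b topology \<Rightarrow> ('a \<Rightarrow> 'b) \<Rightarrow> bool" where
  "T1_reflection X Y r \<longleftrightarrow> t1_space Y \<and> continuous_map X Y r \<and> r ` topspace X = topspace Y \<and>
     (\<forall>(Z :: 'a topology) f. t1_space Z \<and> continuous_map X Z f \<longrightarrow>
        (\<exists>g. continuous_map Y Z g \<and> (\<forall>x \<in> topspace X. g (r x) = f x)) \<and>
        (\<forall>g1 g2. continuous_map Y Z g1 \<and> (\<forall>x \<in> topspace X. g1 (r x) = f x) \<and>
                 continuous_map Y Z g2 \<and> (\<forall>x \<in> topspace X. g2 (r x) = f x) \<longrightarrow>
                 (\<forall>y \<in> topspace Y. g1 y = g2 y)))"

end

theory Submission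
  imports Defs "HOL-Algebra.Coset"
begin

text \<open>Let \<open>S\<close> be the least closed subgroup of a left topological group \<open>G\<close>. For a continuous
map \<open>f\<close> into a \<open>T\<^sub>1\<close> space, the elements \<open>g\<close> with \<open>f(xg) = f(x)\<close> for all \<open>x\<close> form a closed
subgroup, so \<open>f\<close> is constant on the left cosets \<open>xS\<close>; conversely, left cosets of a closed subgroup
are closed, so the coset space \<open>G/S\<close> is \<open>T\<^sub>1\<close>. Hence the \<open>T\<^sub>1\<close>-reflection of \<open>G\<close> is a quotient map
whose fibres are the cosets \<open>xS\<close>. A closed subgroup \<open>H\<close> contains \<open>S\<close>, so it is a union of such
cosets, and the reflection of \<open>H\<close> identifies the same points. The induced map from the reflection
of \<open>H\<close> onto the image of \<open>H\<close> is therefore a continuous bijection, and it is closed because the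
reflection of \<open>G\<close> maps saturated closed sets to closed sets. The right-handed case is the
left-handed one for the opposite group.\<close>

definition quotient_topology :: "'a topology \<Rightarrow> ('a \<Rightarrow> 'b) \<Rightarrow> 'b topology" where
  "quotient_topology X f =
     topology (\<lambda>U. U \<subseteq> f ` topspace X \<and> openin X {x \<in> topspace X. f x \<in> U})"

lemma openin_quotient_topology:
  "openin (quotient_topology X f) U \<longleftrightarrow>
     U \<subseteq> f ` topspace X \<and> openin X {x \<in> topspace X. f x \<in> U}"
proof -
  have "istopology (\<lambda>U. U \<subseteq> f ` topspace X \<and> openin X {x \<in> topspace X. f x \<in> U})"
    unfolding istopology_def
  proof (rule conjI; intro allI impI)
    fix U V
    assume "U \<subseteq> f ` topspace X \<and> openin X {x \<in> topspace X. f x \<in> U}"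
      and "V \<subseteq> f ` topspace X \<and> openin X {x \<in> topspace X. f x \<in> V}"
    moreover have "{x \<in> topspace X. f x \<in> U \<inter> V} =
        {x \<in> topspace X. f x \<in> U} \<inter> {x \<in> topspace X. f x \<in> V}"
      by auto
    ultimately show "U \<inter> V \<subseteq> f ` topspace X \<and> openin X {x \<in> topspace X. f x \<in> U \<inter> V}"
      by auto
  next
    fix \<U>
    assume \<U>: "\<forall>U\<in>\<U>. U \<subseteq> f ` topspace X \<and> openin X {x \<in> topspace X. f x \<in> U}"
    have "{x \<in> topspace X. f x \<in> \<Union>\<U>} = (\<Union>U\<in>\<U>. {x \<in> topspace X. f x \<in> U})"
      by auto
    with \<U> show "\<Union>\<U> \<subseteq> f ` topspace X \<and> openin X {x \<in> topspace X. f x \<in> \<Union>\<U>}"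
      by auto
  qed
  then show ?thesis
    by (simp add: quotient_topology_def)
qed

lemma topspace_quotient_topology: "topspace (quotient_topology X f) = f ` topspace X"
proof (rule antisym)
  show "topspace (quotient_topology X f) \<subseteq> f ` topspace X"
    using openin_quotient_topology[of X f "topspace (quotient_topology X f)"] by simp
  have "{x \<in> topspace X. f x \<in> f ` topspace X} = topspace X"
    by auto
  then have "openin (quotient_topology X f) (f ` topspace X)"
    by (simp add: openin_quotient_topology)
  then show "f ` topspace X \<subseteq> topspace (quotient_topology X f)"
    by (rule openin_subset)
qed

lemma quotient_map_quotient_topology: "quotient_map X (quotient_topology X f) f"
  by (auto simp: quotient_map_def openin_quotient_topology topspace_quotient_topology)

lemma equiv_obtain_representatives:
  assumes "equiv A r"
  obtains rep :: "'a \<Rightarrow> 'a" where "\<And>x y. x \<in> A \<Longrightarrow> y \<in> A \<Longrightarrow> rep x = rep y \<longleftrightarrow> (x, y) \<in> r"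
proof -
  define rep where "rep a = (SOME z. z \<in> r``{a})" for a
  have rep_in_class: "(a, rep a) \<in> r" if "a \<in> A" for a
    unfolding rep_def using equiv_class_self[OF assms that] by (metis someI Image_singleton_iff)
  have "rep x = rep y \<longleftrightarrow> (x, y) \<in> r" if x: "x \<in> A" and y: "y \<in> A" for x y
  proof
    assume "rep x = rep y"
    then show "(x, y) \<in> r"
      using assms rep_in_class[OF x] rep_in_class[OF y] by (metis equiv_def symE transE)
  next
    assume "(x, y) \<in> r"
    then show "rep x = rep y"
      using assms by (simp add: rep_def equiv_class_eq_iff)
  qed
  then show ?thesis
    by (rule that)
qed

lemma T1_reflectionD:
  assumes "T1_reflection X R r"
  shows "t1_space R" "continuous_map X R r" "r ` topspace X = topspace R"
  using assms by (simp_all add: T1_reflection_def)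

lemma T1_reflection_factorization:
  fixes X Z :: "'a topology"
  assumes "T1_reflection X R r" "continuous_map X Z f" "t1_space Z"
  obtains g where "continuous_map R Z g" "\<forall>x \<in> topspace X. g (r x) = f x"
  using assms unfolding T1_reflection_def by blast

lemma T1_reflection_eq_imp_eq:
  fixes X Z :: "'a topology"
  assumes "T1_reflection X R r" "continuous_map X Z f" "t1_space Z"
    and "x \<in> topspace X" "y \<in> topspace X" "r x = r y"
  shows "f x = f y"
  using T1_reflection_factorization[OF assms(1-3)] assms(4-6) by metis

lemma T1_reflection_quotient_map:
  fixes X Z :: "'a topology"
  assumes R: "T1_reflection X R r" and q: "quotient_map X Z q" "t1_space Z"
    and q_fibres: "\<And>x y. x \<in> topspace X \<Longrightarrow> y \<in> topspace X \<Longrightarrow> q x = q y \<Longrightarrow> r x = r y"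
  shows "quotient_map X R r"
proof -
  note r = T1_reflectionD(2,3)[OF R]
  obtain g where g: "continuous_map R Z g" and gr: "\<forall>x \<in> topspace X. g (r x) = q x"
    using T1_reflection_factorization[OF R quotient_imp_continuous_map[OF q(1)] q(2)] .
  have g_inj: "inj_on g (topspace R)"
  proof (rule inj_onI)
    fix u v assume "u \<in> topspace R" "v \<in> topspace R" and g_eq: "g u = g v"
    then obtain x y where x: "x \<in> topspace X" "u = r x" and y: "y \<in> topspace X" "v = r y"
      unfolding r(2)[symmetric] by blast
    have "q x = q y"
      using gr x y g_eq by metis
    then show "u = v"
      using q_fibres[OF x(1) y(1)] x(2) y(2) by simp
  qed
  have "quotient_map X Z (g \<circ> r)"
    using q(1) by (rule quotient_map_eq) (simp add: gr)
  then have "quotient_map R Z g"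
    by (rule quotient_map_from_composition[OF r(1) g])
  with g_inj have "homeomorphic_map R Z g"
    by (simp add: homeomorphic_map_def)
  then obtain g' where "homeomorphic_maps R Z g g'"
    using homeomorphic_map_maps by blast
  then have g': "quotient_map Z R g'" "\<forall>u \<in> topspace R. g' (g u) = u"
    unfolding homeomorphic_maps_map homeomorphic_map_def by blast+
  have "quotient_map X R (g' \<circ> q)"
    using q(1) g'(1) by (rule quotient_map_compose)
  then show ?thesis
  proof (rule quotient_map_eq)
    fix x assume "x \<in> topspace X"
    then show "(g' \<circ> q) x = r x"
      using gr g'(2) r(2) by force
  qed
qed

lemma homeomorphic_map_onto_saturated_closedin:
  assumes r: "quotient_map X Y r" and S: "closedin X S"
    and r': "continuous_map (subtopology X S) Y' r'" "r' ` S = topspace Y'"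
    and \<phi>: "continuous_map Y' Y \<phi>" "\<And>x. x \<in> S \<Longrightarrow> \<phi> (r' x) = r x"
    and saturated: "\<And>x y. x \<in> S \<Longrightarrow> y \<in> topspace X \<Longrightarrow> r x = r y \<Longrightarrow> y \<in> S \<and> r' x = r' y"
  shows "homeomorphic_map Y' (subtopology Y (r ` S)) \<phi>"
proof (rule bijective_closed_imp_homeomorphic_map)
  have S_sub: "S \<subseteq> topspace X"
    using S by (rule closedin_subset)
  have \<phi>_image: "\<phi> ` r' ` D = r ` D" if "D \<subseteq> S" for D
    using \<phi>(2) that by (force simp: image_comp)
  have "r ` S \<subseteq> topspace Y"
    using S_sub quotient_imp_surjective_map[OF r] by blast
  then show image: "\<phi> ` topspace Y' = topspace (subtopology Y (r ` S))"
    using \<phi>_image[of S] r'(2) by auto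
  show "continuous_map Y' (subtopology Y (r ` S)) \<phi>"
    using \<phi>(1) image by (auto simp: continuous_map_in_subtopology)
  show "inj_on \<phi> (topspace Y')"
  proof (rule inj_onI)
    fix u v assume "u \<in> topspace Y'" "v \<in> topspace Y'" and eq: "\<phi> u = \<phi> v"
    then obtain x y where xy: "x \<in> S" "y \<in> S" and uv: "u = r' x" "v = r' y"
      unfolding r'(2)[symmetric] by blast
    then have "r x = r y"
      using eq \<phi>(2) by simp
    then show "u = v"
      using saturated xy uv S_sub by blast
  qed
  show "closed_map Y' (subtopology Y (r ` S)) \<phi>"
    unfolding closed_map_def
  proof (intro allI impI)
    fix C assume C: "closedin Y' C"
    define D where "D = {x \<in> S. r' x \<in> C}"
    have "closedin (subtopology X S) D"
      using closedin_continuous_map_preimage[OF r'(1) C] S_sub by (simp add: D_def Int_absorb1)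
    then have D_closed: "closedin X D"
      using S closedin_trans_full by blast
    have "{x \<in> topspace X. r x \<in> r ` D} \<subseteq> D"
    proof
      fix y assume "y \<in> {x \<in> topspace X. r x \<in> r ` D}"
      then obtain x where "x \<in> D" "y \<in> topspace X" "r y = r x"
        by blast
      then show "y \<in> D"
        using saturated[of x y] unfolding D_def by simp
    qed
    with D_closed have "closedin Y (r ` D)"
      using r unfolding quotient_map_saturated_closed by blast
    moreover have "\<phi> ` C = r ` D"
    proof -
      have "C = r' ` D"
        using closedin_subset[OF C] r'(2) by (auto simp: D_def)
      then show ?thesis
        using \<phi>_image[of D] by (simp add: D_def)
    qed
    moreover have "r ` D \<subseteq> r ` S"
      by (auto simp: D_def)
    ultimately show "closedin (subtopology Y (r ` S)) (\<phi> ` C)"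
      by (simp add: closedin_subset_topspace)
  qed
qed

definition least_closed_subgroup :: "('a, 'm) monoid_scheme \<Rightarrow> 'a topology \<Rightarrow> 'a set" where
  "least_closed_subgroup G T = \<Inter>{K. subgroup K G \<and> closedin T K}"

context group
begin

lemma least_closed_subgroup_subset:
  "subgroup K G \<Longrightarrow> closedin T K \<Longrightarrow> least_closed_subgroup G T \<subseteq> K"
  by (auto simp: least_closed_subgroup_def)

lemma carrier_closed_subgroup:
  "topspace T = carrier G \<Longrightarrow> carrier G \<in> {K. subgroup K G \<and> closedin T K}"
  using subgroup_self closedin_topspace[of T] by simp

lemma closedin_least_closed_subgroup:
  assumes "topspace T = carrier G"
  shows "closedin T (least_closed_subgroup G T)"
  unfolding least_closed_subgroup_def
proof (rule closedin_Inter)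
  show "{K. subgroup K G \<and> closedin T K} \<noteq> {}"
    using carrier_closed_subgroup[OF assms] by blast
qed auto

lemma subgroup_least_closed_subgroup:
  assumes "topspace T = carrier G"
  shows "subgroup (least_closed_subgroup G T) G"
  unfolding least_closed_subgroup_def
proof (rule subgroups_Inter)
  show "{K. subgroup K G \<and> closedin T K} \<noteq> {}"
    using carrier_closed_subgroup[OF assms] by blast
qed auto

lemma closedin_left_coset:
  assumes "left_topological_group G T" "closedin T K" "x \<in> carrier G"
  shows "closedin T {y \<in> carrier G. inv x \<otimes> y \<in> K}"
proof -
  have "continuous_map T T (\<lambda>y. inv x \<otimes> y)" and top: "topspace T = carrier G"
    using assms unfolding left_topological_group_def by auto
  from this(1) assms(2) have "closedin T {y \<in> topspace T. inv x \<otimes> y \<in> K}"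
    by (rule closedin_continuous_map_preimage)
  then show ?thesis
    by (simp add: top)
qed

lemma subgroup_right_stabilizer:
  assumes "subgroup H G"
  shows "subgroup {g \<in> H. \<forall>x \<in> H. f (x \<otimes> g) = f x} G"
proof (rule subgroupI)
  have H: "H \<subseteq> carrier G"
    using assms by (rule subgroup.subset)
  then show "{g \<in> H. \<forall>x \<in> H. f (x \<otimes> g) = f x} \<subseteq> carrier G"
    by auto
  have "\<one> \<in> {g \<in> H. \<forall>x \<in> H. f (x \<otimes> g) = f x}"
    using H subgroup.one_closed[OF assms] by auto
  then show "{g \<in> H. \<forall>x \<in> H. f (x \<otimes> g) = f x} \<noteq> {}"
    by blast
next
  fix g assume g: "g \<in> {g \<in> H. \<forall>x \<in> H. f (x \<otimes> g) = f x}"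
  have "f (x \<otimes> inv g) = f x" if x: "x \<in> H" for x
  proof -
    have "x \<otimes> inv g \<in> H"
      using g x subgroup.m_closed[OF assms] subgroup.m_inv_closed[OF assms] by blast
    then have "f (x \<otimes> inv g \<otimes> g) = f (x \<otimes> inv g)"
      using g by blast
    moreover have "x \<otimes> inv g \<otimes> g = x"
      using subgroup.mem_carrier[OF assms] g x by (simp add: m_assoc)
    ultimately show ?thesis
      by simp
  qed
  with g show "inv g \<in> {g \<in> H. \<forall>x \<in> H. f (x \<otimes> g) = f x}"
    using subgroup.m_inv_closed[OF assms] by blast
next
  fix g h assume g: "g \<in> {g \<in> H. \<forall>x \<in> H. f (x \<otimes> g) = f x}"
    and h: "h \<in> {g \<in> H. \<forall>x \<in> H. f (x \<otimes> g) = f x}"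
  have "f (x \<otimes> (g \<otimes> h)) = f x" if x: "x \<in> H" for x
  proof -
    have "f (x \<otimes> (g \<otimes> h)) = f (x \<otimes> g \<otimes> h)"
      using subgroup.mem_carrier[OF assms] g h x by (simp add: m_assoc)
    also have "\<dots> = f (x \<otimes> g)"
      using h subgroup.m_closed[OF assms x] g by blast
    also have "\<dots> = f x"
      using g x by blast
    finally show ?thesis .
  qed
  with g h show "g \<otimes> h \<in> {g \<in> H. \<forall>x \<in> H. f (x \<otimes> g) = f x}"
    using subgroup.m_closed[OF assms] by blast
qed

lemma closedin_right_stabilizer:
  assumes LT: "left_topological_group G T" and H: "subgroup H G" "closedin T H"
    and f: "continuous_map (subtopology T H) Z f" "t1_space Z"
  shows "closedin T {g \<in> H. \<forall>x \<in> H. f (x \<otimes> g) = f x}"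
proof -
  have H_top: "topspace (subtopology T H) = H"
    using closedin_subset[OF H(2)] by auto
  have fibre_closed: "closedin (subtopology T H) {g \<in> H. f (x \<otimes> g) \<in> {f x}}" if x: "x \<in> H" for x
  proof -
    have "continuous_map T T (\<lambda>g. x \<otimes> g)"
      using LT x subgroup.mem_carrier[OF H(1)] unfolding left_topological_group_def by blast
    moreover have "(\<lambda>g. x \<otimes> g) ` H \<subseteq> H"
      using H(1) x by (auto intro: subgroup.m_closed)
    ultimately have "continuous_map (subtopology T H) (subtopology T H) (\<lambda>g. x \<otimes> g)"
      by (simp add: continuous_map_from_subtopology continuous_map_in_subtopology image_subset_iff)
    then have "continuous_map (subtopology T H) Z (f \<circ> (\<lambda>g. x \<otimes> g))"
      using f(1) by (rule continuous_map_compose)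
    moreover have "f x \<in> topspace Z"
      using continuous_map_image_subset_topspace[OF f(1)] x H_top by blast
    then have "closedin Z {f x}"
      using f(2) by (simp add: t1_space_closedin_singleton)
    ultimately have "closedin (subtopology T H)
        {g \<in> topspace (subtopology T H). (f \<circ> (\<lambda>g. x \<otimes> g)) g \<in> {f x}}"
      by (rule closedin_continuous_map_preimage)
    then show ?thesis
      unfolding H_top by simp
  qed
  have "closedin (subtopology T H) H"
    using closedin_topspace[of "subtopology T H"] H_top by simp
  then have "closedin (subtopology T H) (\<Inter>(insert H ((\<lambda>x. {g \<in> H. f (x \<otimes> g) \<in> {f x}}) ` H)))"
    using fibre_closed by (intro closedin_Inter) auto
  moreover have "\<Inter>(insert H ((\<lambda>x. {g \<in> H. f (x \<otimes> g) \<in> {f x}}) ` H)) =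
      {g \<in> H. \<forall>x \<in> H. f (x \<otimes> g) = f x}"
    by auto
  ultimately have "closedin (subtopology T H) {g \<in> H. \<forall>x \<in> H. f (x \<otimes> g) = f x}"
    by simp
  then show ?thesis
    using closedin_trans_full H(2) by blast
qed

lemma least_closed_subgroup_coset_imp_eq:
  assumes LT: "left_topological_group G T" and H: "subgroup H G" "closedin T H"
    and f: "continuous_map (subtopology T H) Z f" "t1_space Z"
    and xy: "x \<in> H" "y \<in> H" "inv x \<otimes> y \<in> least_closed_subgroup G T"
  shows "f x = f y"
proof -
  have "least_closed_subgroup G T \<subseteq> {g \<in> H. \<forall>x \<in> H. f (x \<otimes> g) = f x}"
    using subgroup_right_stabilizer[OF H(1)] closedin_right_stabilizer[OF LT H f]
    by (rule least_closed_subgroup_subset)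
  then have "inv x \<otimes> y \<in> {g \<in> H. \<forall>x \<in> H. f (x \<otimes> g) = f x}"
    using xy(3) by blast
  then have "f (x \<otimes> (inv x \<otimes> y)) = f x"
    using xy(1) by blast
  moreover have "x \<otimes> (inv x \<otimes> y) = y"
    using xy H(1) by (simp add: m_assoc[symmetric] subgroup.mem_carrier)
  ultimately show ?thesis
    by simp
qed

lemma left_coset_space_t1:
  assumes LT: "left_topological_group G T" and K: "subgroup K G" "closedin T K"
  obtains Z :: "'a topology" and q :: "'a \<Rightarrow> 'a"
  where "quotient_map T Z q" "t1_space Z"
    "\<And>x y. x \<in> carrier G \<Longrightarrow> y \<in> carrier G \<Longrightarrow> q x = q y \<longleftrightarrow> inv x \<otimes> y \<in> K"
proof -
  obtain rep :: "'a \<Rightarrow> 'a"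
    where rep: "\<And>x y. x \<in> carrier G \<Longrightarrow> y \<in> carrier G \<Longrightarrow> rep x = rep y \<longleftrightarrow> (x, y) \<in> rcong K"
    using equiv_obtain_representatives[OF subgroup.equiv_rcong[OF K(1) is_group]] by blast
  have top: "topspace T = carrier G"
    using LT unfolding left_topological_group_def by blast
  have fibres: "rep x = rep y \<longleftrightarrow> inv x \<otimes> y \<in> K" if "x \<in> carrier G" "y \<in> carrier G" for x y
    using rep[OF that] that by (simp add: r_congruent_def)
  have quotient: "quotient_map T (quotient_topology T rep) rep"
    by (rule quotient_map_quotient_topology)
  have "closedin (quotient_topology T rep) {rep z}" if z: "z \<in> carrier G" for z
  proof -
    have "{x \<in> topspace T. rep x \<in> {rep z}} = {x \<in> carrier G. inv z \<otimes> x \<in> K}"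
      using fibres[OF z] top by (auto simp: eq_commute[of "rep z"])
    then have "closedin T {x \<in> topspace T. rep x \<in> {rep z}}"
      using closedin_left_coset[OF LT K(2) z] by (simp only:)
    moreover have "{rep z} \<subseteq> topspace (quotient_topology T rep)"
      using z top by (simp add: topspace_quotient_topology)
    ultimately show ?thesis
      using quotient[unfolded quotient_map_closedin] by blast
  qed
  then have "t1_space (quotient_topology T rep)"
    unfolding t1_space_closedin_singleton topspace_quotient_topology top by blast
  then show ?thesis
    by (rule that[OF quotient _ fibres])
qed

lemma T1_reflection_left_topological_group:
  assumes LT: "left_topological_group G T" and R: "T1_reflection T R r"
  shows "quotient_map T R r"
    and "\<And>x y. x \<in> carrier G \<Longrightarrow> y \<in> carrier G \<Longrightarrow>
           r x = r y \<longleftrightarrow> inv x \<otimes> y \<in> least_closed_subgroup G T"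
proof -
  have top: "topspace T = carrier G"
    using LT unfolding left_topological_group_def by blast
  have "closedin T (carrier G)"
    using closedin_topspace[of T] by (simp add: top)
  moreover have "continuous_map (subtopology T (carrier G)) R r"
    using T1_reflectionD(2)[OF R] subtopology_topspace[of T] by (simp add: top)
  ultimately have coset_imp_eq: "r x = r y"
    if "x \<in> carrier G" "y \<in> carrier G" "inv x \<otimes> y \<in> least_closed_subgroup G T" for x y
    using least_closed_subgroup_coset_imp_eq[OF LT subgroup_self _ _ T1_reflectionD(1)[OF R] that]
    by blast
  obtain q :: "'a \<Rightarrow> 'a" and Z :: "'a topology" where q: "quotient_map T Z q" "t1_space Z"
    and q_fibres: "\<And>x y. x \<in> carrier G \<Longrightarrow> y \<in> carrier G \<Longrightarrow>
                     q x = q y \<longleftrightarrow> inv x \<otimes> y \<in> least_closed_subgroup G T"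
    using left_coset_space_t1[OF LT subgroup_least_closed_subgroup[OF top]
        closedin_least_closed_subgroup[OF top]] by blast
  show "quotient_map T R r"
  proof (rule T1_reflection_quotient_map[OF R q])
    fix x y assume xy: "x \<in> topspace T" "y \<in> topspace T" and "q x = q y"
    then have "inv x \<otimes> y \<in> least_closed_subgroup G T"
      using q_fibres unfolding top by blast
    with xy show "r x = r y"
      unfolding top by (rule coset_imp_eq)
  qed
  show "r x = r y \<longleftrightarrow> inv x \<otimes> y \<in> least_closed_subgroup G T"
    if xy: "x \<in> carrier G" "y \<in> carrier G" for x y
  proof
    assume "r x = r y"
    with xy have "q x = q y"
      unfolding top[symmetric]
      by (rule T1_reflection_eq_imp_eq[OF R quotient_imp_continuous_map[OF q(1)] q(2)])
    then show "inv x \<otimes> y \<in> least_closed_subgroup G T"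
      using q_fibres[OF xy] by simp
  qed (rule coset_imp_eq[OF xy])
qed

lemma homeomorphic_map_T1_reflection_closed_subgroup:
  assumes LT: "left_topological_group G T" and H: "subgroup H G" "closedin T H"
    and RG: "T1_reflection T RG rG" and RH: "T1_reflection (subtopology T H) RH rH"
    and \<phi>: "continuous_map RH RG \<phi>" "\<forall>h \<in> H. \<phi> (rH h) = rG h"
  shows "homeomorphic_map RH (subtopology RG (rG ` H)) \<phi>"
proof (rule homeomorphic_map_onto_saturated_closedin)
  have top: "topspace T = carrier G"
    using LT unfolding left_topological_group_def by blast
  show "quotient_map T RG rG"
    using LT RG by (rule T1_reflection_left_topological_group(1))
  show "rH ` H = topspace RH"
    using T1_reflectionD(3)[OF RH] closedin_subset[OF H(2)] by (simp add: Int_absorb1)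
  fix x y assume x: "x \<in> H" and y: "y \<in> topspace T" and eq: "rG x = rG y"
  have xG: "x \<in> carrier G"
    by (rule subgroup.mem_carrier[OF H(1) x])
  have yG: "y \<in> carrier G"
    using y top by simp
  have coset: "inv x \<otimes> y \<in> least_closed_subgroup G T"
    using T1_reflection_left_topological_group(2)[OF LT RG xG yG] eq by blast
  then have "x \<otimes> (inv x \<otimes> y) \<in> H"
    using subgroup.m_closed[OF H(1) x] least_closed_subgroup_subset[OF H] by blast
  moreover have "x \<otimes> (inv x \<otimes> y) = y"
    using xG yG by (simp add: m_assoc[symmetric])
  ultimately have yH: "y \<in> H"
    by simp
  then show "y \<in> H \<and> rH x = rH y"
    using least_closed_subgroup_coset_imp_eq[OF LT H T1_reflectionD(2,1)[OF RH] x yH coset]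
    by blast
qed (use assms T1_reflectionD(2)[OF RH] in auto)

end

definition opposite_group :: "('a, 'm) monoid_scheme \<Rightarrow> 'a monoid" where
  "opposite_group G = \<lparr>carrier = carrier G, mult = (\<lambda>x y. y \<otimes>\<^bsub>G\<^esub> x), one = \<one>\<^bsub>G\<^esub>\<rparr>"

context group
begin

lemma group_opposite_group: "group (opposite_group G)"
proof (rule groupI)
  show "\<one>\<^bsub>opposite_group G\<^esub> \<in> carrier (opposite_group G)"
    by (simp add: opposite_group_def)
  fix x assume x: "x \<in> carrier (opposite_group G)"
  show "\<one>\<^bsub>opposite_group G\<^esub> \<otimes>\<^bsub>opposite_group G\<^esub> x = x"
    using x by (simp add: opposite_group_def)
  show "\<exists>y \<in> carrier (opposite_group G). y \<otimes>\<^bsub>opposite_group G\<^esub> x = \<one>\<^bsub>opposite_group G\<^esub>"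
    using x by (intro bexI[of _ "inv x"]) (simp_all add: opposite_group_def)
next
  fix x y assume "x \<in> carrier (opposite_group G)" "y \<in> carrier (opposite_group G)"
  then show "x \<otimes>\<^bsub>opposite_group G\<^esub> y \<in> carrier (opposite_group G)"
    by (simp add: opposite_group_def)
next
  fix x y z
  assume "x \<in> carrier (opposite_group G)" "y \<in> carrier (opposite_group G)"
    "z \<in> carrier (opposite_group G)"
  then show "x \<otimes>\<^bsub>opposite_group G\<^esub> y \<otimes>\<^bsub>opposite_group G\<^esub> z =
      x \<otimes>\<^bsub>opposite_group G\<^esub> (y \<otimes>\<^bsub>opposite_group G\<^esub> z)"
    by (simp add: opposite_group_def m_assoc)
qed

lemma inv_opposite_group: "x \<in> carrier G \<Longrightarrow> inv\<^bsub>opposite_group G\<^esub> x = inv x"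
  by (rule group.inv_equality[OF group_opposite_group]) (simp_all add: opposite_group_def)

lemma subgroup_opposite_group:
  assumes "subgroup H G"
  shows "subgroup H (opposite_group G)"
proof
  have H: "H \<subseteq> carrier G"
    using assms by (rule subgroup.subset)
  then show "H \<subseteq> carrier (opposite_group G)"
    by (simp add: opposite_group_def)
  show "\<one>\<^bsub>opposite_group G\<^esub> \<in> H"
    using subgroup.one_closed[OF assms] by (simp add: opposite_group_def)
  fix x y assume "x \<in> H" "y \<in> H"
  then show "x \<otimes>\<^bsub>opposite_group G\<^esub> y \<in> H"
    using subgroup.m_closed[OF assms] by (simp add: opposite_group_def)
next
  fix x assume x: "x \<in> H"
  then have "inv\<^bsub>opposite_group G\<^esub> x = inv x"
    using subgroup.mem_carrier[OF assms] inv_opposite_group by blast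
  then show "inv\<^bsub>opposite_group G\<^esub> x \<in> H"
    using subgroup.m_inv_closed[OF assms x] by simp
qed

lemma left_topological_group_opposite_group:
  "right_topological_group G T \<Longrightarrow> left_topological_group (opposite_group G) T"
  using group_opposite_group
  by (simp add: right_topological_group_def left_topological_group_def opposite_group_def)

end

theorem corollary5p11:
  fixes G :: "('a, 'm) monoid_scheme" and T :: "'a topology" and H :: "'a set"
    and RG :: "'b topology" and rG :: "'a \<Rightarrow> 'b"
    and RH :: "'c topology" and rH :: "'a \<Rightarrow> 'c"
    and \<phi> :: "'c \<Rightarrow> 'b"
  assumes "left_topological_group G T \<or> right_topological_group G T"
    and "subgroup H G"
    and "closedin T H"
    and "T1_reflection T RG rG"
    and "T1_reflection (subtopology T H) RH rH"
    and "continuous_map RH RG \<phi>"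
    and "\<forall>h \<in> H. \<phi> (rH h) = rG h"
  shows "homeomorphic_map RH (subtopology RG (rG ` H)) \<phi>"
  using assms(1)
proof
  assume left: "left_topological_group G T"
  then have "group G"
    by (simp add: left_topological_group_def)
  then show ?thesis
    using left assms(2-7) by (rule group.homeomorphic_map_T1_reflection_closed_subgroup)
next
  assume right: "right_topological_group G T"
  then have G: "group G"
    by (simp add: right_topological_group_def)
  show ?thesis
    using group.left_topological_group_opposite_group[OF G right]
      group.subgroup_opposite_group[OF G assms(2)] assms(3-7)
    by (rule group.homeomorphic_map_T1_reflection_closed_subgroup[OF group.group_opposite_group[OF G]])
qed

end
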